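(* Let $f:G\to H$ be a morphism of cubical $\omega$-categories with connections such that the induced morphism of $\omega$-categories $\gamma f:\gamma G\to\gamma H$ is an isomorphism. Then $f$ is an isomorphism.
   Context: A cubical $\omega$-category with connections $G$ consists of sets $G_n$ ($n\ge0$), face maps $\partial^\alpha_i:G_n\to G_{n-1}$, degeneracies $\varepsilon_i:G_{n-1}\to G_n$, connections $\Gamma^\alpha_i:G_n\to G_{n+1}$ ($1\le i\le n$, $\alpha=\pm$) and partial compositions $\circ_j$ on $G_n$ ($1\le j\le n$, $a\circ_jb$ defined iff $\partial^+_ja=\partial^-_jb$) satisfying: the cubical identities $\partial^\alpha_i\partial^\beta_j=\partial^\beta_{j-1}\partial^\alpha_i$ ($i<j$), $\varepsilon_i\varepsilon_j=\varepsilon_{j+1}\varepsilon_i$ ($i\le j$), $\partial^\alpha_i\varepsilon_j=\varepsilon_{j-1}\partial^\alpha_i$ ($i<j$), $\varepsilon_j\partial^\alpha_{i-1}$ ($i>j$), $\mathrm{id}$ ($i=j$); the connection identities $\Gamma^\alpha_i\Gamma^\beta_j=\Gamma^\beta_{j+1}\Gamma^\alpha_i$ ($i<j$), $\Gamma^\alpha_i\Gamma^\alpha_i=\Gamma^\alpha_{i+1}\Gamma^\alpha_i$, $\Gamma^\alpha_i\varepsilon_j=\varepsilon_{j+1}\Gamma^\alpha_i$ ($i<j$), $\varepsilon_j\Gamma^\alpha_{i-1}$ ($i>j$), $\Gamma^\alpha_j\varepsilon_j=\varepsilon_{j+1}\varepsilon_j$, $\partial^\alpha_i\Gamma^\beta_j=\Gamma^\beta_{j-1}\partial^\alpha_i$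 ($i<j$), $\Gamma^\beta_j\partial^\alpha_{i-1}$ ($i>j+1$), $\partial^\alpha_j\Gamma^\alpha_j=\partial^\alpha_{j+1}\Gamma^\alpha_j=\mathrm{id}$, $\partial^\alpha_j\Gamma^{-\alpha}_j=\partial^\alpha_{j+1}\Gamma^{-\alpha}_j=\varepsilon_j\partial^\alpha_j$; $\partial^-_j(a\circ_jb)=\partial^-_ja$, $\partial^+_j(a\circ_jb)=\partial^+_jb$, $\partial^\alpha_i(a\circ_jb)=\partial^\alpha_ia\circ_{j-1}\partial^\alpha_ib$ ($i<j$), $\partial^\alpha_ia\circ_j\partial^\alpha_ib$ ($i>j$); interchange for $i\ne j$; $\varepsilon_i(a\circ_jb)=\varepsilon_ia\circ_{j+1}\varepsilon_ib$ ($i\le j$), $\varepsilon_ia\circ_j\varepsilon_ib$ ($i>j$); $\Gamma^\alpha_i(a\circ_jb)=\Gamma^\alpha_ia\circ_{j+1}\Gamma^\alpha_ib$ ($i<j$), $\Gamma^\alpha_ia\circ_j\Gamma^\alpha_ib$ ($i>j$); $\Gamma^+_j(a\circ_jb)=(\Gamma^+_ja\circ_j\varepsilon_ja)\circ_{j+1}(\varepsilon_{j+1}a\circ_j\Gamma^+_jb)$, $\Gamma^-_j(a\circ_jb)=(\Gamma^-_ja\circ_j\varepsilon_{j+1}b)\circ_{j+1}(\varepsilon_jb\circ_j\Gamma^-_jb)$; each $\circ_j$ a category structure with identities $\varepsilon_jy$; $\Gamma^+_ix\circ_i\Gamma^-_ix=\varepsilon_{i+1}x$, $\Gamma^+_ix\circ_{i+1}\Gamma^-_ix=\varepsilon_ix$.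 Morphisms preserve all this structure. Folding operations on $G_n$: $\psi_ix=\Gamma^+_i\partial^-_{i+1}x\circ_{i+1}x\circ_{i+1}\Gamma^-_i\partial^+_{i+1}x$ ($1\le i\le n-1$), $\Psi_r=\psi_{r-1}\cdots\psi_1$, $\Phi_n=\Psi_1\Psi_2\cdots\Psi_n$ ($\Phi_0=\Phi_1=\mathrm{id}$). $\gamma G$: the set $\Phi_n(G_n)$ is an $\omega$-category (globular strict $\omega$-category) with $d^\alpha_px=\varepsilon_1^{n-p}(\partial^\alpha_1)^{n-p}x$ and $x\#_py=x\circ_{n-p}y$ for $0\le p<n$, and $d^\alpha_px=x$ with only composites $x\#_px=x$ for $p\ge n$; $\varepsilon_1$ maps $\Phi_n(G_n)$ homomorphically into $\Phi_{n+1}(G_{n+1})$, and $\gamma G$ is the colimit of $\Phi_0(G_0)\xrightarrow{\varepsilon_1}\Phi_1(G_1)\xrightarrow{\varepsilon_1}\cdots$. A morphism $f$ commutes with $\Phi_n$ and $\varepsilon_1$, and $\gamma f$ is the induced morphism of colimits. *)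

theory Defs
  imports Main
begin

text \<open>The sign alpha is a bool: True is +, False is -.
   face G n i a x   : the face operator from G_n to G_(n-1)          (1 <= i <= n)
   degen G n i x    : the degeneracy eps_i from G_(n-1) to G_n        (1 <= i <= n)
   conn G n i a x   : the connection Gamma_i from G_n to G_(n+1)      (1 <= i <= n)
   comp G n j x y   : the composition x o_j y on G_n                  (1 <= j <= n)
  The operations are total functions; only their values on the carriers
  (and, for comp, on composable pairs) are constrained.\<close>

record 'a cubcat =
  cells :: "nat \<Rightarrow> 'a set"
  face  :: "nat \<Rightarrow> nat \<Rightarrow> bool \<Rightarrow> 'a \<Rightarrow> 'a"
  degen :: "nat \<Rightarrow> nat \<Rightarrow> 'a \<Rightarrow> 'a"
  conn  :: "nat \<Rightarrow> nat \<Rightarrow> bool \<Rightarrow> 'a \<Rightarrow> 'a"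
  comp  :: "nat \<Rightarrow> nat \<Rightarrow> 'a \<Rightarrow> 'a \<Rightarrow> 'a"

definition composable :: "'a cubcat \<Rightarrow> nat \<Rightarrow> nat \<Rightarrow> 'a \<Rightarrow> 'a \<Rightarrow> bool" where
  "composable G n j a b \<longleftrightarrow> a \<in> cells G n \<and> b \<in> cells G n \<and>
     face G n j True a = face G n j False b"

definition cub_closed :: "'a cubcat \<Rightarrow> bool" where
  "cub_closed G \<longleftrightarrow>
    (\<forall>n i \<alpha> x. 1 \<le> i \<and> i \<le> n \<and> x \<in> cells G n \<longrightarrow> face G n i \<alpha> x \<in> cells G (n - 1)) \<and>
    (\<forall>n i x. 1 \<le> i \<and> i \<le> n \<and> x \<in> cells G (n - 1) \<longrightarrow> degen G n i x \<in> cells G n) \<and>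
    (\<forall>n i \<alpha> x. 1 \<le> i \<and> i \<le> n \<and> x \<in> cells G n \<longrightarrow> conn G n i \<alpha> x \<in> cells G (Suc n)) \<and>
    (\<forall>n j a b. 1 \<le> j \<and> j \<le> n \<and> composable G n j a b \<longrightarrow> comp G n j a b \<in> cells G n)"

definition cub_identities :: "'a cubcat \<Rightarrow> bool" where
  "cub_identities G \<longleftrightarrow>
    (\<forall>n i j \<alpha> \<beta> x. 1 \<le> i \<and> i < j \<and> j \<le> n \<and> x \<in> cells G n \<longrightarrow>
       face G (n - 1) i \<alpha> (face G n j \<beta> x) = face G (n - 1) (j - 1) \<beta> (face G n i \<alpha> x)) \<and>
    (\<forall>n i j x. 1 \<le> i \<and> i \<le> j \<and> j \<le> n + 1 \<and> x \<in> cells G n \<longrightarrow>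
       degen G (n + 2) i (degen G (n + 1) j x) = degen G (n + 2) (j + 1) (degen G (n + 1) i x)) \<and>
    (\<forall>n i j \<alpha> x. 1 \<le> i \<and> i < j \<and> j \<le> n + 1 \<and> x \<in> cells G n \<longrightarrow>
       face G (n + 1) i \<alpha> (degen G (n + 1) j x) = degen G n (j - 1) (face G n i \<alpha> x)) \<and>
    (\<forall>n i j \<alpha> x. 1 \<le> j \<and> j < i \<and> i \<le> n + 1 \<and> x \<in> cells G n \<longrightarrow>
       face G (n + 1) i \<alpha> (degen G (n + 1) j x) = degen G n j (face G n (i - 1) \<alpha> x)) \<and>
    (\<forall>n i \<alpha> x. 1 \<le> i \<and> i \<le> n + 1 \<and> x \<in> cells G n \<longrightarrow>
       face G (n + 1) i \<alpha> (degen G (n + 1) i x) = x)"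

definition conn_identities :: "'a cubcat \<Rightarrow> bool" where
  "conn_identities G \<longleftrightarrow>
    (\<forall>n i j \<alpha> \<beta> x. 1 \<le> i \<and> i < j \<and> j \<le> n \<and> x \<in> cells G n \<longrightarrow>
       conn G (n + 1) i \<alpha> (conn G n j \<beta> x) = conn G (n + 1) (j + 1) \<beta> (conn G n i \<alpha> x)) \<and>
    (\<forall>n i \<alpha> x. 1 \<le> i \<and> i \<le> n \<and> x \<in> cells G n \<longrightarrow>
       conn G (n + 1) i \<alpha> (conn G n i \<alpha> x) = conn G (n + 1) (i + 1) \<alpha> (conn G n i \<alpha> x)) \<and>
    (\<forall>n i j \<alpha> x. 1 \<le> i \<and> i < j \<and> j \<le> n + 1 \<and> x \<in> cells G n \<longrightarrow>
       conn G (n + 1) i \<alpha> (degen G (n + 1) j x) = degen G (n + 2) (j + 1) (conn G n i \<alpha> x)) \<and>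
    (\<forall>n i j \<alpha> x. 1 \<le> j \<and> j < i \<and> i \<le> n + 1 \<and> x \<in> cells G n \<longrightarrow>
       conn G (n + 1) i \<alpha> (degen G (n + 1) j x) = degen G (n + 2) j (conn G n (i - 1) \<alpha> x)) \<and>
    (\<forall>n j \<alpha> x. 1 \<le> j \<and> j \<le> n + 1 \<and> x \<in> cells G n \<longrightarrow>
       conn G (n + 1) j \<alpha> (degen G (n + 1) j x) = degen G (n + 2) (j + 1) (degen G (n + 1) j x)) \<and>
    (\<forall>n i j \<alpha> \<beta> x. 1 \<le> i \<and> i < j \<and> j \<le> n \<and> x \<in> cells G n \<longrightarrow>
       face G (n + 1) i \<alpha> (conn G n j \<beta> x) = conn G (n - 1) (j - 1) \<beta> (face G n i \<alpha> x)) \<and>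
    (\<forall>n i j \<alpha> \<beta> x. 1 \<le> j \<and> j + 1 < i \<and> i \<le> n + 1 \<and> x \<in> cells G n \<longrightarrow>
       face G (n + 1) i \<alpha> (conn G n j \<beta> x) = conn G (n - 1) j \<beta> (face G n (i - 1) \<alpha> x)) \<and>
    (\<forall>n j \<alpha> x. 1 \<le> j \<and> j \<le> n \<and> x \<in> cells G n \<longrightarrow>
       face G (n + 1) j \<alpha> (conn G n j \<alpha> x) = x \<and>
       face G (n + 1) (j + 1) \<alpha> (conn G n j \<alpha> x) = x) \<and>
    (\<forall>n j \<alpha> x. 1 \<le> j \<and> j \<le> n \<and> x \<in> cells G n \<longrightarrow>
       face G (n + 1) j \<alpha> (conn G n j (\<not> \<alpha>) x) = degen G n j (face G n j \<alpha> x) \<and>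
       face G (n + 1) (j + 1) \<alpha> (conn G n j (\<not> \<alpha>) x) = degen G n j (face G n j \<alpha> x))"

definition comp_identities :: "'a cubcat \<Rightarrow> bool" where
  "comp_identities G \<longleftrightarrow>
    (\<forall>n j a b. 1 \<le> j \<and> j \<le> n \<and> composable G n j a b \<longrightarrow>
       face G n j False (comp G n j a b) = face G n j False a \<and>
       face G n j True (comp G n j a b) = face G n j True b) \<and>
    (\<forall>n i j \<alpha> a b. 1 \<le> i \<and> i < j \<and> j \<le> n \<and> composable G n j a b \<longrightarrow>
       face G n i \<alpha> (comp G n j a b) = comp G (n - 1) (j - 1) (face G n i \<alpha> a) (face G n i \<alpha> b)) \<and>
    (\<forall>n i j \<alpha> a b. 1 \<le> j \<and> j < i \<and> i \<le> n \<and> composable G n j a b \<longrightarrow>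
       face G n i \<alpha> (comp G n j a b) = comp G (n - 1) j (face G n i \<alpha> a) (face G n i \<alpha> b)) \<and>
    (\<forall>n i j a b c d. 1 \<le> i \<and> i \<le> n \<and> 1 \<le> j \<and> j \<le> n \<and> i \<noteq> j \<and>
       composable G n i a b \<and> composable G n i c d \<and>
       composable G n j a c \<and> composable G n j b d \<longrightarrow>
       comp G n j (comp G n i a b) (comp G n i c d) = comp G n i (comp G n j a c) (comp G n j b d)) \<and>
    (\<forall>n i j a b. 1 \<le> i \<and> i \<le> j \<and> j \<le> n \<and> composable G n j a b \<longrightarrow>
       degen G (n + 1) i (comp G n j a b) =
         comp G (n + 1) (j + 1) (degen G (n + 1) i a) (degen G (n + 1) i b)) \<and>
    (\<forall>n i j a b. 1 \<le> j \<and> j < i \<and> i \<le> n + 1 \<and> composable G n j a b \<longrightarrow>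
       degen G (n + 1) i (comp G n j a b) =
         comp G (n + 1) j (degen G (n + 1) i a) (degen G (n + 1) i b)) \<and>
    (\<forall>n i j \<alpha> a b. 1 \<le> i \<and> i < j \<and> j \<le> n \<and> composable G n j a b \<longrightarrow>
       conn G n i \<alpha> (comp G n j a b) = comp G (n + 1) (j + 1) (conn G n i \<alpha> a) (conn G n i \<alpha> b)) \<and>
    (\<forall>n i j \<alpha> a b. 1 \<le> j \<and> j < i \<and> i \<le> n \<and> composable G n j a b \<longrightarrow>
       conn G n i \<alpha> (comp G n j a b) = comp G (n + 1) j (conn G n i \<alpha> a) (conn G n i \<alpha> b)) \<and>
    (\<forall>n j a b. 1 \<le> j \<and> j \<le> n \<and> composable G n j a b \<longrightarrow>
       conn G n j True (comp G n j a b) =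
         comp G (n + 1) (j + 1)
           (comp G (n + 1) j (conn G n j True a) (degen G (n + 1) j a))
           (comp G (n + 1) j (degen G (n + 1) (j + 1) a) (conn G n j True b))) \<and>
    (\<forall>n j a b. 1 \<le> j \<and> j \<le> n \<and> composable G n j a b \<longrightarrow>
       conn G n j False (comp G n j a b) =
         comp G (n + 1) (j + 1)
           (comp G (n + 1) j (conn G n j False a) (degen G (n + 1) (j + 1) b))
           (comp G (n + 1) j (degen G (n + 1) j b) (conn G n j False b)))"

definition cat_identities :: "'a cubcat \<Rightarrow> bool" where
  "cat_identities G \<longleftrightarrow>
    (\<forall>n j a b c. 1 \<le> j \<and> j \<le> n \<and> composable G n j a b \<and> composable G n j b c \<longrightarrow>
       comp G n j (comp G n j a b) c = comp G n j a (comp G n j b c)) \<and>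
    (\<forall>n j a. 1 \<le> j \<and> j \<le> n \<and> a \<in> cells G n \<longrightarrow>
       comp G n j (degen G n j (face G n j False a)) a = a \<and>
       comp G n j a (degen G n j (face G n j True a)) = a) \<and>
    (\<forall>n i x. 1 \<le> i \<and> i \<le> n \<and> x \<in> cells G n \<longrightarrow>
       comp G (n + 1) i (conn G n i True x) (conn G n i False x) = degen G (n + 1) (i + 1) x \<and>
       comp G (n + 1) (i + 1) (conn G n i True x) (conn G n i False x) = degen G (n + 1) i x)"

definition cubical_omega_cat :: "'a cubcat \<Rightarrow> bool" where
  "cubical_omega_cat G \<longleftrightarrow> cub_closed G \<and> cub_identities G \<and> conn_identities G \<and>
     comp_identities G \<and> cat_identities G"

definition cub_hom :: "'a cubcat \<Rightarrow> 'b cubcat \<Rightarrow> (nat \<Rightarrow> 'a \<Rightarrow> 'b) \<Rightarrow> bool" where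
  "cub_hom G H f \<longleftrightarrow>
    (\<forall>n x. x \<in> cells G n \<longrightarrow> f n x \<in> cells H n) \<and>
    (\<forall>n i \<alpha> x. 1 \<le> i \<and> i \<le> n \<and> x \<in> cells G n \<longrightarrow>
       f (n - 1) (face G n i \<alpha> x) = face H n i \<alpha> (f n x)) \<and>
    (\<forall>n i x. 1 \<le> i \<and> i \<le> n \<and> x \<in> cells G (n - 1) \<longrightarrow>
       f n (degen G n i x) = degen H n i (f (n - 1) x)) \<and>
    (\<forall>n i \<alpha> x. 1 \<le> i \<and> i \<le> n \<and> x \<in> cells G n \<longrightarrow>
       f (Suc n) (conn G n i \<alpha> x) = conn H n i \<alpha> (f n x)) \<and>
    (\<forall>n j a b. 1 \<le> j \<and> j \<le> n \<and> composable G n j a b \<longrightarrow>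
       f n (comp G n j a b) = comp H n j (f n a) (f n b))"

definition cub_iso :: "'a cubcat \<Rightarrow> 'b cubcat \<Rightarrow> (nat \<Rightarrow> 'a \<Rightarrow> 'b) \<Rightarrow> bool" where
  "cub_iso G H f \<longleftrightarrow> cub_hom G H f \<and>
    (\<exists>g. cub_hom H G g \<and>
         (\<forall>n. \<forall>x \<in> cells G n. g n (f n x) = x) \<and>
         (\<forall>n. \<forall>y \<in> cells H n. f n (g n y) = y))"

definition psi :: "'a cubcat \<Rightarrow> nat \<Rightarrow> nat \<Rightarrow> 'a \<Rightarrow> 'a" where
  "psi G n i x =
     comp G n (i + 1)
       (comp G n (i + 1) (conn G (n - 1) i True (face G n (i + 1) False x)) x)
       (conn G (n - 1) i False (face G n (i + 1) True x))"

text \<open>Psi G n r = psi_(r-1) o ... o psi_1 (on G_n); Psi G n 0 = Psi G n 1 = id.\<close>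
primrec Psi :: "'a cubcat \<Rightarrow> nat \<Rightarrow> nat \<Rightarrow> 'a \<Rightarrow> 'a" where
  "Psi G n 0 x = x"
| "Psi G n (Suc r) x = (if r = 0 then x else psi G n r (Psi G n r x))"

text \<open>PhiAux G n k = Psi_1 o Psi_2 o ... o Psi_k (on G_n), so Phi_n = PhiAux G n n.\<close>
primrec PhiAux :: "'a cubcat \<Rightarrow> nat \<Rightarrow> nat \<Rightarrow> 'a \<Rightarrow> 'a" where
  "PhiAux G n 0 x = x"
| "PhiAux G n (Suc k) x = PhiAux G n k (Psi G n (Suc k) x)"

definition Phi :: "'a cubcat \<Rightarrow> nat \<Rightarrow> 'a \<Rightarrow> 'a" where
  "Phi G n x = (if n \<le> 1 then x else PhiAux G n n x)"

primrec eps1pow :: "'a cubcat \<Rightarrow> nat \<Rightarrow> nat \<Rightarrow> 'a \<Rightarrow> 'a" where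
  "eps1pow G n 0 x = x"
| "eps1pow G n (Suc k) x = degen G (n + k + 1) 1 (eps1pow G n k x)"

primrec face1pow :: "'a cubcat \<Rightarrow> nat \<Rightarrow> bool \<Rightarrow> nat \<Rightarrow> 'a \<Rightarrow> 'a" where
  "face1pow G n \<alpha> 0 x = x"
| "face1pow G n \<alpha> (Suc k) x = face G (n - k) 1 \<alpha> (face1pow G n \<alpha> k x)"

text \<open>The colimit gamma G of Phi_0(G_0) -> Phi_1(G_1) -> ... along eps_1, as the set of
  equivalence classes of pairs (n, x) with x in Phi_n(G_n).\<close>

definition gpairs :: "'a cubcat \<Rightarrow> (nat \<times> 'a) set" where
  "gpairs G = {(n, x). x \<in> Phi G n ` cells G n}"

definition gequiv :: "'a cubcat \<Rightarrow> nat \<times> 'a \<Rightarrow> nat \<times> 'a \<Rightarrow> bool" where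
  "gequiv G p q \<longleftrightarrow> p \<in> gpairs G \<and> q \<in> gpairs G \<and>
     (\<exists>k. fst p \<le> k \<and> fst q \<le> k \<and>
        eps1pow G (fst p) (k - fst p) (snd p) = eps1pow G (fst q) (k - fst q) (snd q))"

definition gclass :: "'a cubcat \<Rightarrow> nat \<Rightarrow> 'a \<Rightarrow> (nat \<times> 'a) set" where
  "gclass G n x = {q. gequiv G (n, x) q}"

record 'c omegacat =
  ocarrier :: "'c set"
  od :: "nat \<Rightarrow> bool \<Rightarrow> 'c \<Rightarrow> 'c"
  ocomp :: "nat \<Rightarrow> 'c \<Rightarrow> 'c \<Rightarrow> 'c"

definition gamma :: "'a cubcat \<Rightarrow> (nat \<times> 'a) set omegacat" where
  "gamma G =
    \<lparr> ocarrier = {gclass G n x | n x. (n, x) \<in> gpairs G},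
      od = (\<lambda>p \<alpha> c. {q. \<exists>n x. (n, x) \<in> c \<and> p < n \<and>
               gequiv G (n, eps1pow G p (n - p) (face1pow G n \<alpha> (n - p) x)) q}),
      ocomp = (\<lambda>p c e. {q. \<exists>n x y. (n, x) \<in> c \<and> (n, y) \<in> e \<and> p < n \<and>
               gequiv G (n, comp G n (n - p) x y) q}) \<rparr>"

definition gamma_map :: "'b cubcat \<Rightarrow> (nat \<Rightarrow> 'a \<Rightarrow> 'b) \<Rightarrow> (nat \<times> 'a) set \<Rightarrow> (nat \<times> 'b) set" where
  "gamma_map H f c = {q. \<exists>n x. (n, x) \<in> c \<and> gequiv H (n, f n x) q}"

definition omega_hom :: "'c omegacat \<Rightarrow> 'd omegacat \<Rightarrow> ('c \<Rightarrow> 'd) \<Rightarrow> bool" where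
  "omega_hom C D F \<longleftrightarrow>
    (\<forall>x \<in> ocarrier C. F x \<in> ocarrier D) \<and>
    (\<forall>p \<alpha> x. x \<in> ocarrier C \<longrightarrow> F (od C p \<alpha> x) = od D p \<alpha> (F x)) \<and>
    (\<forall>p x y. x \<in> ocarrier C \<and> y \<in> ocarrier C \<and> od C p True x = od C p False y \<longrightarrow>
       F (ocomp C p x y) = ocomp D p (F x) (F y))"

definition omega_iso :: "'c omegacat \<Rightarrow> 'd omegacat \<Rightarrow> ('c \<Rightarrow> 'd) \<Rightarrow> bool" where
  "omega_iso C D F \<longleftrightarrow> omega_hom C D F \<and>
    (\<exists>F'. omega_hom D C F' \<and> (\<forall>x \<in> ocarrier C. F' (F x) = x) \<and>
          (\<forall>y \<in> ocarrier D. F (F' y) = y))"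

end

theory Submission
  imports Defs
begin

(* Folding loses nothing but faces: a cube x is recovered from psi_i x and its four faces
   d^-/+_i x, d^-/+_(i+1) x by a composite of connections and degeneracies (unpsi).
   So if f is bijective in dimension n, then in dimension n+1 it is injective, resp. surjective,
   as soon as it is so after folding by Phi_(n+1); composability is reflected along the way because
   it is an equation between faces of dimension n. If gamma f is an isomorphism, then f is injective
   and surjective on folded cubes (eps_1 is split by d_1), and induction on n makes every f_n
   bijective. A bijective morphism is an isomorphism. *)

locale cub_omega_cat =
  fixes G :: "'a cubcat"
  assumes cubical_omega_cat: "cubical_omega_cat G"
begin

lemma face_closed:
  "x \<in> cells G (Suc n) \<Longrightarrow> 1 \<le> i \<Longrightarrow> i \<le> Suc n \<Longrightarrow> face G (Suc n) i \<alpha> x \<in> cells G n"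
  using cubical_omega_cat unfolding cubical_omega_cat_def cub_closed_def by (metis diff_Suc_1)

lemma degen_closed:
  "x \<in> cells G n \<Longrightarrow> 1 \<le> i \<Longrightarrow> i \<le> Suc n \<Longrightarrow> degen G (Suc n) i x \<in> cells G (Suc n)"
  using cubical_omega_cat unfolding cubical_omega_cat_def cub_closed_def by (metis diff_Suc_1)

lemma conn_closed:
  "x \<in> cells G n \<Longrightarrow> 1 \<le> i \<Longrightarrow> i \<le> n \<Longrightarrow> conn G n i \<alpha> x \<in> cells G (Suc n)"
  using cubical_omega_cat unfolding cubical_omega_cat_def cub_closed_def by metis

lemma comp_closed:
  "composable G n j a b \<Longrightarrow> 1 \<le> j \<Longrightarrow> j \<le> n \<Longrightarrow> comp G n j a b \<in> cells G n"
  using cubical_omega_cat unfolding cubical_omega_cat_def cub_closed_def by metis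

lemma face_face:
  "x \<in> cells G (Suc n) \<Longrightarrow> 1 \<le> i \<Longrightarrow> i < j \<Longrightarrow> j \<le> Suc n \<Longrightarrow>
   face G n i \<alpha> (face G (Suc n) j \<beta> x) = face G n (j - 1) \<beta> (face G (Suc n) i \<alpha> x)"
  using cubical_omega_cat unfolding cubical_omega_cat_def cub_identities_def by (metis diff_Suc_1)

lemma degen_degen:
  "x \<in> cells G n \<Longrightarrow> 1 \<le> i \<Longrightarrow> i \<le> j \<Longrightarrow> j \<le> Suc n \<Longrightarrow>
   degen G (Suc (Suc n)) i (degen G (Suc n) j x) = degen G (Suc (Suc n)) (Suc j) (degen G (Suc n) i x)"
  using cubical_omega_cat unfolding cubical_omega_cat_def cub_identities_def
  by (metis Suc_eq_plus1 add_2_eq_Suc')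

lemma face_degen_less:
  "x \<in> cells G n \<Longrightarrow> 1 \<le> i \<Longrightarrow> i < j \<Longrightarrow> j \<le> Suc n \<Longrightarrow>
   face G (Suc n) i \<alpha> (degen G (Suc n) j x) = degen G n (j - 1) (face G n i \<alpha> x)"
  using cubical_omega_cat unfolding cubical_omega_cat_def cub_identities_def by (metis Suc_eq_plus1)

lemma face_degen_greater:
  "x \<in> cells G n \<Longrightarrow> 1 \<le> j \<Longrightarrow> j < i \<Longrightarrow> i \<le> Suc n \<Longrightarrow>
   face G (Suc n) i \<alpha> (degen G (Suc n) j x) = degen G n j (face G n (i - 1) \<alpha> x)"
  using cubical_omega_cat unfolding cubical_omega_cat_def cub_identities_def by (metis Suc_eq_plus1)

lemma face_degen_same:
  "x \<in> cells G n \<Longrightarrow> 1 \<le> i \<Longrightarrow> i \<le> Suc n \<Longrightarrow> face G (Suc n) i \<alpha> (degen G (Suc n) i x) = x"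
  using cubical_omega_cat unfolding cubical_omega_cat_def cub_identities_def by (metis Suc_eq_plus1)

lemma face_conn_same:
  "x \<in> cells G n \<Longrightarrow> 1 \<le> j \<Longrightarrow> j \<le> n \<Longrightarrow>
   face G (Suc n) j \<alpha> (conn G n j \<alpha> x) = x \<and> face G (Suc n) (Suc j) \<alpha> (conn G n j \<alpha> x) = x"
  using cubical_omega_cat unfolding cubical_omega_cat_def conn_identities_def by (metis Suc_eq_plus1)

lemma face_conn_opposite:
  "x \<in> cells G n \<Longrightarrow> 1 \<le> j \<Longrightarrow> j \<le> n \<Longrightarrow>
   face G (Suc n) j \<alpha> (conn G n j (\<not> \<alpha>) x) = degen G n j (face G n j \<alpha> x) \<and>
   face G (Suc n) (Suc j) \<alpha> (conn G n j (\<not> \<alpha>) x) = degen G n j (face G n j \<alpha> x)"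
  using cubical_omega_cat unfolding cubical_omega_cat_def conn_identities_def by (metis Suc_eq_plus1)

lemma face_comp_target:
  "composable G n j a b \<Longrightarrow> 1 \<le> j \<Longrightarrow> j \<le> n \<Longrightarrow> face G n j True (comp G n j a b) = face G n j True b"
  using cubical_omega_cat unfolding cubical_omega_cat_def comp_identities_def by metis

lemma face_comp_less:
  "composable G (Suc n) j a b \<Longrightarrow> 1 \<le> i \<Longrightarrow> i < j \<Longrightarrow> j \<le> Suc n \<Longrightarrow>
   face G (Suc n) i \<alpha> (comp G (Suc n) j a b) =
     comp G n (j - 1) (face G (Suc n) i \<alpha> a) (face G (Suc n) i \<alpha> b)"
  using cubical_omega_cat unfolding cubical_omega_cat_def comp_identities_def by (metis diff_Suc_1)

lemma comp_interchange:
  "1 \<le> i \<Longrightarrow> i \<le> n \<Longrightarrow> 1 \<le> j \<Longrightarrow> j \<le> n \<Longrightarrow> i \<noteq> j \<Longrightarrow>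
   composable G n i a b \<Longrightarrow> composable G n i c d \<Longrightarrow>
   composable G n j a c \<Longrightarrow> composable G n j b d \<Longrightarrow>
   comp G n j (comp G n i a b) (comp G n i c d) = comp G n i (comp G n j a c) (comp G n j b d)"
  using cubical_omega_cat unfolding cubical_omega_cat_def comp_identities_def by metis

lemma comp_left_unit:
  "1 \<le> j \<Longrightarrow> j \<le> n \<Longrightarrow> a \<in> cells G n \<Longrightarrow> comp G n j (degen G n j (face G n j False a)) a = a"
  using cubical_omega_cat unfolding cubical_omega_cat_def cat_identities_def by metis

lemma comp_right_unit:
  "1 \<le> j \<Longrightarrow> j \<le> n \<Longrightarrow> a \<in> cells G n \<Longrightarrow> comp G n j a (degen G n j (face G n j True a)) = a"
  using cubical_omega_cat unfolding cubical_omega_cat_def cat_identities_def by metis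

lemma conn_comp_conn:
  "1 \<le> i \<Longrightarrow> i \<le> n \<Longrightarrow> x \<in> cells G n \<Longrightarrow>
   comp G (Suc n) i (conn G n i True x) (conn G n i False x) = degen G (Suc n) (Suc i) x"
  using cubical_omega_cat unfolding cubical_omega_cat_def cat_identities_def by (metis Suc_eq_plus1)

lemma psi_composable:
  assumes x: "x \<in> cells G (Suc n)" and i: "1 \<le> i" "i \<le> n"
  shows "composable G (Suc n) (Suc i) (conn G n i True (face G (Suc n) (Suc i) False x)) x"
    and "composable G (Suc n) (Suc i)
           (comp G (Suc n) (Suc i) (conn G n i True (face G (Suc n) (Suc i) False x)) x)
           (conn G n i False (face G (Suc n) (Suc i) True x))"
proof -
  have faces: "face G (Suc n) (Suc i) \<alpha> x \<in> cells G n" for \<alpha>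
    using face_closed[OF x] i by auto
  show left: "composable G (Suc n) (Suc i) (conn G n i True (face G (Suc n) (Suc i) False x)) x"
    unfolding composable_def using conn_closed[OF faces] face_conn_same[OF faces] i x by auto
  then show "composable G (Suc n) (Suc i)
           (comp G (Suc n) (Suc i) (conn G n i True (face G (Suc n) (Suc i) False x)) x)
           (conn G n i False (face G (Suc n) (Suc i) True x))"
    unfolding composable_def
    using comp_closed[OF left] conn_closed[OF faces] face_conn_same[OF faces] face_comp_target[OF left] i
    by auto
qed

lemma psi_closed: "x \<in> cells G (Suc n) \<Longrightarrow> 1 \<le> i \<Longrightarrow> i \<le> n \<Longrightarrow> psi G (Suc n) i x \<in> cells G (Suc n)"
  unfolding psi_def using comp_closed psi_composable(2) by simp

lemma composable_comp:
  assumes ij: "1 \<le> i" "i < j" "j \<le> Suc n"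
    and "composable G (Suc n) j a b" "composable G (Suc n) j c d"
    and "composable G (Suc n) i a c" "composable G (Suc n) i b d"
  shows "composable G (Suc n) i (comp G (Suc n) j a b) (comp G (Suc n) j c d)"
  using assms comp_closed face_comp_less[OF _ ij] unfolding composable_def by auto

end

(* Intended arguments: w = psi_i x and the faces a = d^-_(i+1) x, b = d^+_(i+1) x,
   c = d^-_i x, d = d^+_i x of x. *)
definition unpsi :: "'a cubcat \<Rightarrow> nat \<Rightarrow> nat \<Rightarrow> 'a \<Rightarrow> 'a \<Rightarrow> 'a \<Rightarrow> 'a \<Rightarrow> 'a \<Rightarrow> 'a" where
  "unpsi G n i w a b c d =
     comp G n i (comp G n (Suc i) (degen G n i c) (conn G (n - 1) i True b))
       (comp G n i w (comp G n (Suc i) (conn G (n - 1) i False a) (degen G n i d)))"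

definition unpsi_defined :: "'a cubcat \<Rightarrow> nat \<Rightarrow> nat \<Rightarrow> 'a \<Rightarrow> 'a \<Rightarrow> 'a \<Rightarrow> 'a \<Rightarrow> 'a \<Rightarrow> bool" where
  "unpsi_defined G n i w a b c d \<longleftrightarrow>
     composable G n (Suc i) (degen G n i c) (conn G (n - 1) i True b) \<and>
     composable G n (Suc i) (conn G (n - 1) i False a) (degen G n i d) \<and>
     composable G n i w (comp G n (Suc i) (conn G (n - 1) i False a) (degen G n i d)) \<and>
     composable G n i (comp G n (Suc i) (degen G n i c) (conn G (n - 1) i True b))
       (comp G n i w (comp G n (Suc i) (conn G (n - 1) i False a) (degen G n i d)))"

context cub_omega_cat
begin

lemma conn_pair_cancel:
  assumes x: "x \<in> cells G (Suc n)" and i: "1 \<le> i" "i \<le> n"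
  defines "a \<equiv> face G (Suc n) (Suc i) False x" and "d \<equiv> face G (Suc n) i True x"
  defines "R \<equiv> conn G n i True a" and "T \<equiv> conn G n i False a" and "U \<equiv> degen G (Suc n) i d"
  shows "composable G (Suc n) (Suc i) R x" and "composable G (Suc n) (Suc i) T U"
    and "composable G (Suc n) i (comp G (Suc n) (Suc i) R x) (comp G (Suc n) (Suc i) T U)"
    and "comp G (Suc n) i (comp G (Suc n) (Suc i) R x) (comp G (Suc n) (Suc i) T U) = x"
proof -
  have i': "1 \<le> Suc i" "Suc i \<le> Suc n" "i \<le> Suc n" using i by auto
  have ad: "a \<in> cells G n" "d \<in> cells G n"
    unfolding a_def d_def using face_closed[OF x] i' i by auto
  have ad_faces: "face G n i True a = face G n i False d"
    unfolding a_def d_def using face_face[OF x i(1), of "Suc i"] i by auto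
  have cells: "R \<in> cells G (Suc n)" "T \<in> cells G (Suc n)" "U \<in> cells G (Suc n)"
    unfolding R_def T_def U_def using conn_closed ad degen_closed i by auto
  have fT: "face G (Suc n) (Suc i) True T = degen G n i (face G n i True a)"
    unfolding T_def using face_conn_opposite[OF ad(1) i, of True] by auto
  have fU: "face G (Suc n) i \<alpha> U = d" "face G (Suc n) (Suc i) \<alpha> U = degen G n i (face G n i \<alpha> d)" for \<alpha>
    unfolding U_def using face_degen_same[OF ad(2)] face_degen_greater[OF ad(2), of i "Suc i"] i by auto
  show Rx: "composable G (Suc n) (Suc i) R x"
    unfolding composable_def using cells x face_conn_same[OF ad(1) i] R_def a_def by auto
  show TU: "composable G (Suc n) (Suc i) T U"
    unfolding composable_def using cells fT fU ad_faces by auto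
  have RT: "composable G (Suc n) i R T" "comp G (Suc n) i R T = degen G (Suc n) (Suc i) a"
    unfolding composable_def R_def T_def
    using cells face_conn_same[OF ad(1) i] conn_comp_conn[OF i ad(1)] R_def T_def by auto
  have xU: "composable G (Suc n) i x U" "comp G (Suc n) i x U = x"
    unfolding composable_def using cells x fU comp_right_unit[OF i(1) i'(3) x] d_def U_def by auto
  show "composable G (Suc n) i (comp G (Suc n) (Suc i) R x) (comp G (Suc n) (Suc i) T U)"
    using composable_comp[OF i(1) _ i'(2) Rx TU RT(1) xU(1)] by simp
  show "comp G (Suc n) i (comp G (Suc n) (Suc i) R x) (comp G (Suc n) (Suc i) T U) = x"
    using comp_interchange[OF i'(1,2) i(1) i'(3) _ Rx TU RT(1) xU(1)] RT(2) xU(2)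
      comp_left_unit[OF i'(1,2) x] a_def by simp
qed

lemma psi_comp_conn_degen:
  assumes x: "x \<in> cells G (Suc n)" and i: "1 \<le> i" "i \<le> n"
  defines "a \<equiv> face G (Suc n) (Suc i) False x" and "b \<equiv> face G (Suc n) (Suc i) True x"
    and "d \<equiv> face G (Suc n) i True x"
  defines "T \<equiv> conn G n i False a" and "U \<equiv> degen G (Suc n) i d"
  shows "composable G (Suc n) i (psi G (Suc n) i x) (comp G (Suc n) (Suc i) T U)"
    and "comp G (Suc n) i (psi G (Suc n) i x) (comp G (Suc n) (Suc i) T U) =
           comp G (Suc n) (Suc i) x (conn G n i False b)"
proof -
  obtain k where n: "n = Suc k" using i by (cases n) auto
  define R where "R = conn G n i True a"
  define S where "S = conn G n i False b"
  note cancel = conn_pair_cancel[OF x i, folded a_def d_def, folded R_def T_def U_def]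
  have i': "1 \<le> Suc i" "Suc i \<le> Suc n" "i \<le> Suc n" using i by auto
  have bd: "b \<in> cells G n" "d \<in> cells G n"
    unfolding b_def d_def using face_closed[OF x] i' i by auto
  have bd_faces: "face G n i True b = face G n i True d"
    unfolding b_def d_def using face_face[OF x i(1), of "Suc i"] i by auto
  have S: "S \<in> cells G (Suc n)" "face G (Suc n) (Suc i) False S = b"
    "face G (Suc n) i True S = degen G n i (face G n i True b)"
    unfolding S_def using conn_closed[OF bd(1) i] face_conn_same[OF bd(1) i]
      face_conn_opposite[OF bd(1) i, of True] by auto
  have RxS: "composable G (Suc n) (Suc i) (comp G (Suc n) (Suc i) R x) S"
    unfolding composable_def
    using comp_closed[OF cancel(1)] face_comp_target[OF cancel(1)] S b_def i' by auto
  have psi_eq: "psi G (Suc n) i x = comp G (Suc n) (Suc i) (comp G (Suc n) (Suc i) R x) S"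
    unfolding psi_def R_def S_def a_def b_def by simp
  define p where "p = face G n i True d"
  have p: "p \<in> cells G k" "degen G n i p \<in> cells G n"
    unfolding p_def using face_closed bd(2) degen_closed i n by auto
  \<comment> \<open>Padding the right factor by the identity u in direction i+1 makes the interchange law
    applicable; u is also a right identity for S in direction i.\<close>
  define u where "u = degen G (Suc n) (Suc i) (degen G n i p)"
  have u: "u \<in> cells G (Suc n)" "face G (Suc n) (Suc i) False u = degen G n i p"
    "face G (Suc n) i False u = degen G n i p"
    using degen_closed[OF p(2)] face_degen_same[OF p(2)] face_degen_less[OF p(2), of i "Suc i"]
      face_degen_same[OF p(1)] i n
    unfolding u_def by auto
  have fTU: "face G (Suc n) (Suc i) True (comp G (Suc n) (Suc i) T U) = degen G n i p"
    using face_comp_target[OF cancel(2)] face_degen_greater[OF bd(2), of i "Suc i"] i' i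
    unfolding U_def p_def by auto
  have TU_u: "composable G (Suc n) (Suc i) (comp G (Suc n) (Suc i) T U) u"
    "comp G (Suc n) (Suc i) (comp G (Suc n) (Suc i) T U) u = comp G (Suc n) (Suc i) T U"
    unfolding composable_def
    using comp_closed[OF cancel(2) i'(1,2)] u fTU comp_right_unit[OF i'(1,2) comp_closed[OF cancel(2) i'(1,2)]]
      u_def by auto
  have Su: "composable G (Suc n) i S u" "comp G (Suc n) i S u = S"
  proof -
    show "composable G (Suc n) i S u"
      unfolding composable_def using S u bd_faces p_def by auto
    have "degen G (Suc n) i (degen G n i p) = u"
      unfolding u_def n using degen_degen[OF p(1), of i i] i n by auto
    then show "comp G (Suc n) i S u = S" using comp_right_unit[OF i(1) i'(3) S(1)] S(3) bd_faces p_def by simp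
  qed
  show "composable G (Suc n) i (psi G (Suc n) i x) (comp G (Suc n) (Suc i) T U)"
    using composable_comp[OF i(1) _ i'(2) RxS TU_u(1) cancel(3) Su(1)] psi_eq TU_u(2) by simp
  show "comp G (Suc n) i (psi G (Suc n) i x) (comp G (Suc n) (Suc i) T U) =
      comp G (Suc n) (Suc i) x (conn G n i False b)"
    using comp_interchange[OF i'(1,2) i(1) i'(3) _ RxS TU_u(1) cancel(3) Su(1)]
      psi_eq TU_u(2) Su(2) cancel(4) S_def by simp
qed

lemma unpsi_closed:
  "unpsi_defined G (Suc n) i w a b c d \<Longrightarrow> 1 \<le> i \<Longrightarrow> i \<le> n \<Longrightarrow> unpsi G (Suc n) i w a b c d \<in> cells G (Suc n)"
  unfolding unpsi_def unpsi_defined_def by (simp add: comp_closed)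

lemma unpsi_psi:
  assumes x: "x \<in> cells G (Suc n)" and i: "1 \<le> i" "i \<le> n"
  defines "a \<equiv> face G (Suc n) (Suc i) False x" and "b \<equiv> face G (Suc n) (Suc i) True x"
    and "c \<equiv> face G (Suc n) i False x" and "d \<equiv> face G (Suc n) i True x"
  shows "unpsi_defined G (Suc n) i (psi G (Suc n) i x) a b c d"
    and "unpsi G (Suc n) i (psi G (Suc n) i x) a b c d = x"
proof -
  define P where "P = degen G (Suc n) i c"
  define Q where "Q = conn G n i True b"
  define S where "S = conn G n i False b"
  note psi_TU = conn_pair_cancel(2)[OF x i, folded a_def d_def]
    psi_comp_conn_degen[OF x i, folded a_def b_def d_def S_def]
  have i': "1 \<le> Suc i" "Suc i \<le> Suc n" "i \<le> Suc n" using i by auto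
  have bc: "b \<in> cells G n" "c \<in> cells G n"
    unfolding b_def c_def using face_closed[OF x] i' i by auto
  have cb: "face G n i True c = face G n i False b"
    unfolding b_def c_def using face_face[OF x i(1), of "Suc i"] i by auto
  have PQ: "composable G (Suc n) (Suc i) P Q"
    unfolding composable_def P_def Q_def
    using degen_closed conn_closed bc i face_degen_greater[OF bc(2), of i "Suc i"]
      face_conn_opposite[OF bc(1) i, of False] cb by auto
  have xS: "composable G (Suc n) (Suc i) x S"
    unfolding composable_def S_def using x conn_closed[OF bc(1) i] face_conn_same[OF bc(1) i] b_def by auto
  have Px: "composable G (Suc n) i P x"
    unfolding composable_def P_def using x degen_closed[OF bc(2)] face_degen_same[OF bc(2)] i c_def by auto
  have QS: "composable G (Suc n) i Q S" "comp G (Suc n) i Q S = degen G (Suc n) (Suc i) b"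
    unfolding composable_def Q_def S_def
    using conn_closed[OF bc(1) i] face_conn_same[OF bc(1) i] conn_comp_conn[OF i bc(1)] by auto
  have PQxS: "composable G (Suc n) i (comp G (Suc n) (Suc i) P Q) (comp G (Suc n) (Suc i) x S)"
    using composable_comp[OF i(1) _ i'(2) PQ xS Px QS(1)] by simp
  show "unpsi_defined G (Suc n) i (psi G (Suc n) i x) a b c d"
    unfolding unpsi_defined_def using PQ psi_TU PQxS P_def Q_def by simp
  have "unpsi G (Suc n) i (psi G (Suc n) i x) a b c d =
      comp G (Suc n) i (comp G (Suc n) (Suc i) P Q) (comp G (Suc n) (Suc i) x S)"
    unfolding unpsi_def using psi_TU(3) P_def Q_def by simp
  also have "\<dots> = comp G (Suc n) (Suc i) (comp G (Suc n) i P x) (comp G (Suc n) i Q S)"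
    using comp_interchange[OF i'(1,2) i(1) i'(3) _ PQ xS Px QS(1)] by simp
  also have "\<dots> = x"
    using comp_left_unit[OF i(1) i'(3) x] comp_right_unit[OF i'(1,2) x] QS(2) P_def c_def b_def by simp
  finally show "unpsi G (Suc n) i (psi G (Suc n) i x) a b c d = x" .
qed

end

lemma Psi_induct:
  fixes G :: "'a cubcat" and H :: "'b cubcat"
  assumes id: "P id id"
    and comp: "\<And>g g' h h'. P g g' \<Longrightarrow> P h h' \<Longrightarrow> P (h \<circ> g) (h' \<circ> g')"
    and psi: "\<And>i. 1 \<le> i \<Longrightarrow> i < n \<Longrightarrow> P (psi G n i) (psi H n i)"
    and "r \<le> n"
  shows "P (Psi G n r) (Psi H n r)"
  using \<open>r \<le> n\<close>
proof (induction r)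
  case 0
  have "Psi G n 0 = id" "Psi H n 0 = id" by auto
  then show ?case using id by (simp only:)
next
  case (Suc r)
  show ?case
  proof (cases "r = 0")
    case True
    then have "Psi G n (Suc r) = id" "Psi H n (Suc r) = id" by auto
    then show ?thesis using id by (simp only:)
  next
    case False
    then have "Psi G n (Suc r) = psi G n r \<circ> Psi G n r" "Psi H n (Suc r) = psi H n r \<circ> Psi H n r"
      by auto
    moreover have "P (psi G n r \<circ> Psi G n r) (psi H n r \<circ> Psi H n r)"
      using comp psi Suc False by simp
    ultimately show ?thesis by (simp only:)
  qed
qed

lemma Phi_induct:
  fixes G :: "'a cubcat" and H :: "'b cubcat"
  assumes id: "P id id"
    and comp: "\<And>g g' h h'. P g g' \<Longrightarrow> P h h' \<Longrightarrow> P (h \<circ> g) (h' \<circ> g')"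
    and psi: "\<And>i. 1 \<le> i \<Longrightarrow> i < n \<Longrightarrow> P (psi G n i) (psi H n i)"
  shows "P (Phi G n) (Phi H n)"
proof -
  have "P (PhiAux G n k) (PhiAux H n k)" if "k \<le> n" for k
    using that
  proof (induction k)
    case 0
    have "PhiAux G n 0 = id" "PhiAux H n 0 = id" by auto
    then show ?case using id by (simp only:)
  next
    case (Suc k)
    have "PhiAux G n (Suc k) = PhiAux G n k \<circ> Psi G n (Suc k)"
      "PhiAux H n (Suc k) = PhiAux H n k \<circ> Psi H n (Suc k)"
      by (auto simp del: Psi.simps)
    moreover have "P (PhiAux G n k \<circ> Psi G n (Suc k)) (PhiAux H n k \<circ> Psi H n (Suc k))"
      using comp[OF Psi_induct[of P, OF id comp psi Suc.prems]] Suc by simp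
    ultimately show ?case by (simp only:)
  qed
  moreover have "Phi G n = (if n \<le> 1 then id else PhiAux G n n)"
    "Phi H n = (if n \<le> 1 then id else PhiAux H n n)"
    by (auto simp: Phi_def)
  ultimately show ?thesis using id by simp
qed

lemma gclass_refl: "(n, x) \<in> gpairs G \<Longrightarrow> (n, x) \<in> gclass G n x"
  unfolding gclass_def gequiv_def by auto

lemma eps1pow_add: "eps1pow G m (j + l) x = eps1pow G (m + j) l (eps1pow G m j x)"
  by (induction l) (simp_all add: add.assoc)

lemma gequiv_trans: "gequiv G p q \<Longrightarrow> gequiv G q r \<Longrightarrow> gequiv G p r"
proof -
  assume pq: "gequiv G p q" and qr: "gequiv G q r"
  obtain K1 where K1: "fst p \<le> K1" "fst q \<le> K1"
    "eps1pow G (fst p) (K1 - fst p) (snd p) = eps1pow G (fst q) (K1 - fst q) (snd q)"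
    using pq unfolding gequiv_def by blast
  obtain K2 where K2: "fst q \<le> K2" "fst r \<le> K2"
    "eps1pow G (fst q) (K2 - fst q) (snd q) = eps1pow G (fst r) (K2 - fst r) (snd r)"
    using qr unfolding gequiv_def by blast
  define K where "K = max K1 K2"
  have lift: "eps1pow G m (K - m) x = eps1pow G L (K - L) (eps1pow G m (L - m) x)"
    if "m \<le> L" "L \<le> K" for m L x
    using eps1pow_add[of G m "L - m" "K - L" x] that by simp
  have "eps1pow G (fst p) (K - fst p) (snd p) = eps1pow G (fst q) (K - fst q) (snd q)"
    using lift[of "fst p" K1] lift[of "fst q" K1] K1 K_def by simp
  also have "\<dots> = eps1pow G (fst r) (K - fst r) (snd r)"
    using lift[of "fst q" K2] lift[of "fst r" K2] K2 K_def by simp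
  finally show ?thesis
    using pq qr K1 K2 K_def unfolding gequiv_def by (intro conjI exI[of _ K]) auto
qed

context cub_omega_cat
begin

lemma Phi_closed: "x \<in> cells G n \<Longrightarrow> Phi G n x \<in> cells G n"
proof -
  have "\<forall>x \<in> cells G n. Phi G n x \<in> cells G n"
  proof (rule Phi_induct[where P = "\<lambda>g _. \<forall>x \<in> cells G n. g x \<in> cells G n" and H = G])
    fix i assume "1 \<le> i" "i < n"
    then show "\<forall>x \<in> cells G n. psi G n i x \<in> cells G n"
      using psi_closed by (cases n) auto
  qed auto
  then show "x \<in> cells G n \<Longrightarrow> Phi G n x \<in> cells G n" by blast
qed

lemma gpairs_closed: "(n, x) \<in> gpairs G \<Longrightarrow> x \<in> cells G n"
  unfolding gpairs_def using Phi_closed by auto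

lemma eps1pow_closed: "x \<in> cells G m \<Longrightarrow> eps1pow G m j x \<in> cells G (m + j)"
  by (induction j) (auto intro: degen_closed)

lemma face1pow_closed: "x \<in> cells G n \<Longrightarrow> j \<le> n \<Longrightarrow> face1pow G n \<alpha> j x \<in> cells G (n - j)"
proof (induction j)
  case (Suc j)
  then have "n - j = Suc (n - Suc j)" by auto
  then show ?case using face_closed[of "face1pow G n \<alpha> j x" "n - Suc j" 1 \<alpha>] Suc by auto
qed simp

lemma face1pow_eps1pow: "x \<in> cells G m \<Longrightarrow> face1pow G (m + j) \<alpha> j (eps1pow G m j x) = x"
proof -
  assume x: "x \<in> cells G m"
  have "face1pow G (m + j + l) \<alpha> j (eps1pow G m (j + l) x) = eps1pow G m l x" for l
  proof (induction j arbitrary: l)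
    case (Suc j)
    have "face1pow G (m + Suc j + l) \<alpha> (Suc j) (eps1pow G m (Suc j + l) x) =
        face G (m + l + 1) 1 \<alpha> (face1pow G (m + j + Suc l) \<alpha> j (eps1pow G m (j + Suc l) x))"
      by (simp add: add.commute add.left_commute)
    also have "\<dots> = face G (m + l + 1) 1 \<alpha> (eps1pow G m (Suc l) x)"
      by (simp only: Suc.IH)
    also have "\<dots> = eps1pow G m l x"
      using face_degen_same[OF eps1pow_closed[OF x, of l], of 1 \<alpha>] by simp
    finally show ?case .
  qed simp
  from this[of 0] show ?thesis by simp
qed

lemma gequiv_same_dim: "gequiv G (n, x) (n, y) \<Longrightarrow> x = y"
  unfolding gequiv_def using gpairs_closed face1pow_eps1pow by (metis fst_conv snd_conv le_add_diff_inverse)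

end

locale cub_morphism = G: cub_omega_cat G + H: cub_omega_cat H
  for G :: "'a cubcat" and H :: "'b cubcat" +
  fixes f :: "nat \<Rightarrow> 'a \<Rightarrow> 'b"
  assumes cub_hom: "cub_hom G H f"
begin

lemma f_closed: "x \<in> cells G n \<Longrightarrow> f n x \<in> cells H n"
  using cub_hom unfolding cub_hom_def by blast

lemma f_face:
  "x \<in> cells G (Suc n) \<Longrightarrow> 1 \<le> i \<Longrightarrow> i \<le> Suc n \<Longrightarrow>
   f n (face G (Suc n) i \<alpha> x) = face H (Suc n) i \<alpha> (f (Suc n) x)"
  using cub_hom unfolding cub_hom_def by (metis diff_Suc_1)

lemma f_degen:
  "x \<in> cells G n \<Longrightarrow> 1 \<le> i \<Longrightarrow> i \<le> Suc n \<Longrightarrow>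
   f (Suc n) (degen G (Suc n) i x) = degen H (Suc n) i (f n x)"
  using cub_hom unfolding cub_hom_def by (metis diff_Suc_1)

lemma f_conn:
  "x \<in> cells G n \<Longrightarrow> 1 \<le> i \<Longrightarrow> i \<le> n \<Longrightarrow> f (Suc n) (conn G n i \<alpha> x) = conn H n i \<alpha> (f n x)"
  using cub_hom unfolding cub_hom_def by blast

lemma f_comp:
  "composable G n j a b \<Longrightarrow> 1 \<le> j \<Longrightarrow> j \<le> n \<Longrightarrow> f n (comp G n j a b) = comp H n j (f n a) (f n b)"
  using cub_hom unfolding cub_hom_def by blast

lemma composable_reflect:
  assumes "inj_on (f n) (cells G n)" and "p \<in> cells G (Suc n)" "q \<in> cells G (Suc n)"
    and "composable H (Suc n) j (f (Suc n) p) (f (Suc n) q)" and "1 \<le> j" "j \<le> Suc n"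
  shows "composable G (Suc n) j p q"
  using assms G.face_closed f_face unfolding inj_on_def composable_def by metis

lemma f_psi:
  assumes x: "x \<in> cells G (Suc n)" and i: "1 \<le> i" "i \<le> n"
  shows "f (Suc n) (psi G (Suc n) i x) = psi H (Suc n) i (f (Suc n) x)"
proof -
  have "face G (Suc n) (Suc i) \<alpha> x \<in> cells G n" for \<alpha>
    using G.face_closed[OF x] i by auto
  then show ?thesis
    unfolding psi_def
    using f_comp G.psi_composable[OF x i] f_conn f_face[OF x] i by simp
qed

definition natural :: "nat \<Rightarrow> ('a \<Rightarrow> 'a) \<Rightarrow> ('b \<Rightarrow> 'b) \<Rightarrow> bool" where
  "natural n g g' \<longleftrightarrow>
     (\<forall>x \<in> cells G n. g x \<in> cells G n \<and> f n (g x) = g' (f n x)) \<and> (\<forall>z \<in> cells H n. g' z \<in> cells H n)"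

lemma natural_Phi: "natural n (Phi G n) (Phi H n)"
proof (rule Phi_induct[where P = "natural n"])
  fix i assume i: "1 \<le> i" "i < n"
  then obtain m where n: "n = Suc m" by (cases n) auto
  show "natural n (psi G n i) (psi H n i)"
    unfolding natural_def n using G.psi_closed H.psi_closed f_psi i n by simp
qed (auto simp: natural_def)

lemma f_Phi: "x \<in> cells G n \<Longrightarrow> f n (Phi G n x) = Phi H n (f n x)"
  using natural_Phi unfolding natural_def by auto

lemma f_unpsi:
  assumes "unpsi_defined G (Suc n) i w a b c d" and "1 \<le> i" "i \<le> n"
    and "w \<in> cells G (Suc n)" "a \<in> cells G n" "b \<in> cells G n" "c \<in> cells G n" "d \<in> cells G n"
  shows "f (Suc n) (unpsi G (Suc n) i w a b c d) =
           unpsi H (Suc n) i (f (Suc n) w) (f n a) (f n b) (f n c) (f n d)"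
  using assms unfolding unpsi_def unpsi_defined_def by (simp add: f_comp f_conn f_degen)

lemma unpsi_defined_reflect:
  assumes inj: "inj_on (f n) (cells G n)" and i: "1 \<le> i" "i \<le> n"
    and w: "w \<in> cells G (Suc n)"
    and abcd: "a \<in> cells G n" "b \<in> cells G n" "c \<in> cells G n" "d \<in> cells G n"
    and defined: "unpsi_defined H (Suc n) i (f (Suc n) w) (f n a) (f n b) (f n c) (f n d)"
  shows "unpsi_defined G (Suc n) i w a b c d"
proof -
  define P where "P = degen G (Suc n) i c"
  define Q where "Q = conn G n i True b"
  define T where "T = conn G n i False a"
  define U where "U = degen G (Suc n) i d"
  have i': "1 \<le> Suc i" "Suc i \<le> Suc n" "i \<le> Suc n" using i by auto
  have cells: "P \<in> cells G (Suc n)" "Q \<in> cells G (Suc n)" "T \<in> cells G (Suc n)" "U \<in> cells G (Suc n)"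
    unfolding P_def Q_def T_def U_def using G.degen_closed G.conn_closed abcd i by auto
  have images: "f (Suc n) P = degen H (Suc n) i (f n c)" "f (Suc n) Q = conn H n i True (f n b)"
    "f (Suc n) T = conn H n i False (f n a)" "f (Suc n) U = degen H (Suc n) i (f n d)"
    unfolding P_def Q_def T_def U_def using f_degen f_conn abcd i by auto
  have PQ: "composable G (Suc n) (Suc i) P Q" and TU: "composable G (Suc n) (Suc i) T U"
    using composable_reflect[OF inj] cells defined images i' unfolding unpsi_defined_def by auto
  have wTU: "composable G (Suc n) i w (comp G (Suc n) (Suc i) T U)"
    using composable_reflect[OF inj w] G.comp_closed[OF TU] f_comp[OF TU] defined images i i'
    unfolding unpsi_defined_def by auto
  have "composable G (Suc n) i (comp G (Suc n) (Suc i) P Q) (comp G (Suc n) i w (comp G (Suc n) (Suc i) T U))"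
    using composable_reflect[OF inj] G.comp_closed[OF PQ] G.comp_closed[OF wTU] G.comp_closed[OF TU]
      f_comp[OF PQ] f_comp[OF wTU] f_comp[OF TU] defined images i i'
    unfolding unpsi_defined_def by auto
  then show ?thesis unfolding unpsi_defined_def using PQ TU wTU P_def Q_def T_def U_def by simp
qed

definition reflects_bij :: "nat \<Rightarrow> ('a \<Rightarrow> 'a) \<Rightarrow> ('b \<Rightarrow> 'b) \<Rightarrow> bool" where
  "reflects_bij n g g' \<longleftrightarrow> natural n g g' \<and>
     (\<forall>x \<in> cells G n. \<forall>y \<in> cells G n. f n x = f n y \<longrightarrow> g x = g y \<longrightarrow> x = y) \<and>
     (\<forall>z \<in> cells H n. g' z \<in> f n ` cells G n \<longrightarrow> z \<in> f n ` cells G n)"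

lemma reflects_bij_id: "reflects_bij n id id"
  unfolding reflects_bij_def natural_def by simp

lemma reflects_bij_comp:
  assumes g: "reflects_bij n g g'" and h: "reflects_bij n h h'"
  shows "reflects_bij n (h \<circ> g) (h' \<circ> g')"
proof -
  have g_nat: "\<And>x. x \<in> cells G n \<Longrightarrow> g x \<in> cells G n \<and> f n (g x) = g' (f n x)"
    and g'_closed: "\<And>z. z \<in> cells H n \<Longrightarrow> g' z \<in> cells H n"
    using g unfolding reflects_bij_def natural_def by auto
  have "natural n (h \<circ> g) (h' \<circ> g')"
    using g h unfolding reflects_bij_def natural_def by simp
  moreover have "x = y"
    if "x \<in> cells G n" "y \<in> cells G n" "f n x = f n y" "h (g x) = h (g y)" for x y
  proof -
    have "g x = g y" using h g_nat that unfolding reflects_bij_def by metis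
    then show ?thesis using g that unfolding reflects_bij_def by blast
  qed
  moreover have "z \<in> f n ` cells G n" if "z \<in> cells H n" "h' (g' z) \<in> f n ` cells G n" for z
  proof -
    have "g' z \<in> f n ` cells G n" using h g'_closed that unfolding reflects_bij_def by blast
    then show ?thesis using g that unfolding reflects_bij_def by blast
  qed
  ultimately show ?thesis unfolding reflects_bij_def by simp
qed

lemma psi_inj_step:
  assumes inj: "inj_on (f n) (cells G n)" and i: "1 \<le> i" "i \<le> n"
    and x: "x \<in> cells G (Suc n)" and y: "y \<in> cells G (Suc n)"
    and "f (Suc n) x = f (Suc n) y" and "psi G (Suc n) i x = psi G (Suc n) i y"
  shows "x = y"
proof -
  have faces: "face G (Suc n) j \<alpha> x = face G (Suc n) j \<alpha> y" if "1 \<le> j" "j \<le> Suc n" for j \<alpha>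
    using inj_onD[OF inj _ G.face_closed[OF x that] G.face_closed[OF y that]]
      f_face[OF x that] f_face[OF y that] assms(6) by simp
  have i': "1 \<le> Suc i" "Suc i \<le> Suc n" "i \<le> Suc n" using i by auto
  have "x = unpsi G (Suc n) i (psi G (Suc n) i x) (face G (Suc n) (Suc i) False x)
      (face G (Suc n) (Suc i) True x) (face G (Suc n) i False x) (face G (Suc n) i True x)"
    using G.unpsi_psi(2)[OF x i] by simp
  also have "\<dots> = unpsi G (Suc n) i (psi G (Suc n) i y) (face G (Suc n) (Suc i) False y)
      (face G (Suc n) (Suc i) True y) (face G (Suc n) i False y) (face G (Suc n) i True y)"
    using faces[OF i'(1,2)] faces[OF i(1) i'(3)] assms(7) by simp
  also have "\<dots> = y" using G.unpsi_psi(2)[OF y i] .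
  finally show ?thesis .
qed

lemma psi_surj_step:
  assumes bij: "bij_betw (f n) (cells G n) (cells H n)" and i: "1 \<le> i" "i \<le> n"
    and z: "z \<in> cells H (Suc n)" and v: "v \<in> cells G (Suc n)" "f (Suc n) v = psi H (Suc n) i z"
  shows "z \<in> f (Suc n) ` cells G (Suc n)"
proof -
  have preimage: "\<exists>u \<in> cells G n. f n u = face H (Suc n) j \<alpha> z" if "1 \<le> j" "j \<le> Suc n" for j \<alpha>
    using H.face_closed[OF z that] bij unfolding bij_betw_def by (metis imageE)
  have i': "1 \<le> Suc i" "Suc i \<le> Suc n" "i \<le> Suc n" using i by auto
  obtain a b c d where abcd: "a \<in> cells G n" "b \<in> cells G n" "c \<in> cells G n" "d \<in> cells G n"
    and faces: "f n a = face H (Suc n) (Suc i) False z" "f n b = face H (Suc n) (Suc i) True z"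
      "f n c = face H (Suc n) i False z" "f n d = face H (Suc n) i True z"
    using preimage[OF i'(1,2)] preimage[OF i(1) i'(3)] by blast
  have defined: "unpsi_defined G (Suc n) i v a b c d"
    using unpsi_defined_reflect[OF _ i v(1) abcd] bij H.unpsi_psi(1)[OF z i] v(2) faces
    unfolding bij_betw_def by simp
  have "f (Suc n) (unpsi G (Suc n) i v a b c d) = z"
    using f_unpsi[OF defined i v(1) abcd] H.unpsi_psi(2)[OF z i] v(2) faces by simp
  then show ?thesis using G.unpsi_closed[OF defined i] by blast
qed

lemma reflects_bij_psi:
  assumes bij: "bij_betw (f n) (cells G n) (cells H n)" and i: "1 \<le> i" "i \<le> n"
  shows "reflects_bij (Suc n) (psi G (Suc n) i) (psi H (Suc n) i)"
  unfolding reflects_bij_def natural_def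
proof (intro conjI ballI impI)
  fix z assume z: "z \<in> cells H (Suc n)" and "psi H (Suc n) i z \<in> f (Suc n) ` cells G (Suc n)"
  then obtain v where "v \<in> cells G (Suc n)" "f (Suc n) v = psi H (Suc n) i z" by auto
  then show "z \<in> f (Suc n) ` cells G (Suc n)" using psi_surj_step[OF bij i z] by blast
qed (use G.psi_closed H.psi_closed f_psi psi_inj_step bij i in \<open>auto simp: bij_betw_def\<close>)

lemma reflects_bij_Phi:
  assumes "bij_betw (f n) (cells G n) (cells H n)"
  shows "reflects_bij (Suc n) (Phi G (Suc n)) (Phi H (Suc n))"
proof (rule Phi_induct[where P = "reflects_bij (Suc n)"])
  fix i assume "1 \<le> i" "i < Suc n"
  then show "reflects_bij (Suc n) (psi G (Suc n) i) (psi H (Suc n) i)"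
    using reflects_bij_psi[OF assms] by simp
qed (fact reflects_bij_id, fact reflects_bij_comp)

lemma f_eps1pow: "x \<in> cells G m \<Longrightarrow> f (m + j) (eps1pow G m j x) = eps1pow H m j (f m x)"
  by (induction j) (auto simp: f_degen G.eps1pow_closed)

lemma f_face1pow:
  "x \<in> cells G n \<Longrightarrow> j \<le> n \<Longrightarrow> f (n - j) (face1pow G n \<alpha> j x) = face1pow H n \<alpha> j (f n x)"
proof (induction j)
  case (Suc j)
  then have n: "n - j = Suc (n - Suc j)" by auto
  have "face1pow G n \<alpha> j x \<in> cells G (Suc (n - Suc j))"
    using G.face1pow_closed[of x n j] Suc n by auto
  then show ?case using f_face[of _ "n - Suc j" 1 \<alpha>] Suc n by auto
qed simp

lemma gpairs_image: "(n, w) \<in> gpairs G \<Longrightarrow> (n, f n w) \<in> gpairs H"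
  unfolding gpairs_def using f_Phi f_closed by auto

lemma gamma_map_gclass:
  assumes "(n, w) \<in> gpairs G"
  shows "gamma_map H f (gclass G n w) = gclass H n (f n w)"
proof
  have w: "w \<in> cells G n" "(n, f n w) \<in> gpairs H"
    using G.gpairs_closed[OF assms] gpairs_image[OF assms] by auto
  show "gamma_map H f (gclass G n w) \<subseteq> gclass H n (f n w)"
  proof
    fix q assume "q \<in> gamma_map H f (gclass G n w)"
    then obtain k x where kx: "gequiv G (n, w) (k, x)" "gequiv H (k, f k x) q"
      unfolding gamma_map_def gclass_def by auto
    obtain K where K: "n \<le> K" "k \<le> K" "eps1pow G n (K - n) w = eps1pow G k (K - k) x"
      using kx(1) unfolding gequiv_def by auto
    have x: "x \<in> cells G k" "(k, f k x) \<in> gpairs H"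
      using kx(1) G.gpairs_closed gpairs_image unfolding gequiv_def by auto
    have "eps1pow H n (K - n) (f n w) = eps1pow H k (K - k) (f k x)"
      using f_eps1pow[OF w(1), of "K - n"] f_eps1pow[OF x(1), of "K - k"] K by simp
    then have "gequiv H (n, f n w) (k, f k x)" unfolding gequiv_def using w x K by auto
    then show "q \<in> gclass H n (f n w)" unfolding gclass_def using gequiv_trans kx(2) by blast
  qed
  show "gclass H n (f n w) \<subseteq> gamma_map H f (gclass G n w)"
    using gclass_refl[OF assms] unfolding gamma_map_def gclass_def by auto
qed

lemma gequiv_imp_in_image:
  assumes u: "u \<in> cells G m" and equiv: "gequiv H (m, f m u) (n, w)"
  shows "w \<in> f n ` cells G n"
proof -
  obtain K where K: "m \<le> K" "n \<le> K" "eps1pow H m (K - m) (f m u) = eps1pow H n (K - n) w"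
    using equiv unfolding gequiv_def by auto
  have w: "w \<in> cells H n" using equiv H.gpairs_closed unfolding gequiv_def by auto
  \<comment> \<open>Lifting to a common dimension K and folding back down covers both m \<le> n and m > n.\<close>
  define v where "v = face1pow G K True (K - n) (eps1pow G m (K - m) u)"
  have "f n v = face1pow H K True (K - n) (f K (eps1pow G m (K - m) u))"
    unfolding v_def using f_face1pow[of _ K "K - n"] G.eps1pow_closed[OF u, of "K - m"] K by auto
  also have "\<dots> = face1pow H (n + (K - n)) True (K - n) (eps1pow H n (K - n) w)"
    using f_eps1pow[OF u, of "K - m"] K by simp
  also have "\<dots> = w" using H.face1pow_eps1pow[OF w] .
  finally have "f n v = w" .
  moreover have "v \<in> cells G n"
    unfolding v_def using G.face1pow_closed[OF G.eps1pow_closed[OF u, of "K - m"], of "K - n"] K by simp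
  ultimately show ?thesis by blast
qed

lemma Phi_eq_if_gamma_iso:
  assumes iso: "omega_iso (gamma G) (gamma H) (gamma_map H f)"
    and x: "x \<in> cells G n" and y: "y \<in> cells G n" and fxy: "f n x = f n y"
  shows "Phi G n x = Phi G n y"
proof -
  obtain F' where F': "\<forall>c \<in> ocarrier (gamma G). F' (gamma_map H f c) = c"
    using iso unfolding omega_iso_def by blast
  have p: "(n, Phi G n x) \<in> gpairs G" "(n, Phi G n y) \<in> gpairs G"
    unfolding gpairs_def using x y by auto
  then have "gclass G n (Phi G n x) \<in> ocarrier (gamma G)" "gclass G n (Phi G n y) \<in> ocarrier (gamma G)"
    unfolding gamma_def by auto
  moreover have "gamma_map H f (gclass G n (Phi G n x)) = gamma_map H f (gclass G n (Phi G n y))"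
    using gamma_map_gclass[OF p(1)] gamma_map_gclass[OF p(2)] f_Phi x y fxy by simp
  ultimately have "gclass G n (Phi G n x) = gclass G n (Phi G n y)" using F' by metis
  then have "gequiv G (n, Phi G n x) (n, Phi G n y)"
    using gclass_refl[OF p(2)] unfolding gclass_def by auto
  then show ?thesis by (rule G.gequiv_same_dim)
qed

lemma Phi_in_image_if_gamma_iso:
  assumes iso: "omega_iso (gamma G) (gamma H) (gamma_map H f)" and z: "z \<in> cells H n"
  shows "Phi H n z \<in> f n ` cells G n"
proof -
  obtain F' where hom: "omega_hom (gamma H) (gamma G) F'"
    and inv: "\<forall>c \<in> ocarrier (gamma H). gamma_map H f (F' c) = c"
    using iso unfolding omega_iso_def by blast
  have p: "(n, Phi H n z) \<in> gpairs H" unfolding gpairs_def using z by auto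
  then have c: "gclass H n (Phi H n z) \<in> ocarrier (gamma H)" unfolding gamma_def by auto
  then have "F' (gclass H n (Phi H n z)) \<in> ocarrier (gamma G)"
    using hom unfolding omega_hom_def by blast
  then obtain m u where mu: "F' (gclass H n (Phi H n z)) = gclass G m u" "(m, u) \<in> gpairs G"
    unfolding gamma_def by auto
  have "gclass H m (f m u) = gclass H n (Phi H n z)"
    using inv c mu gamma_map_gclass[OF mu(2)] by metis
  then have "gequiv H (m, f m u) (n, Phi H n z)"
    using gclass_refl[OF p] unfolding gclass_def by auto
  then show ?thesis using gequiv_imp_in_image G.gpairs_closed[OF mu(2)] by blast
qed

lemma bij_betw_if_reflects_bij_Phi:
  assumes iso: "omega_iso (gamma G) (gamma H) (gamma_map H f)"
    and "reflects_bij n (Phi G n) (Phi H n)"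
  shows "bij_betw (f n) (cells G n) (cells H n)"
  using assms(2) Phi_eq_if_gamma_iso[OF iso] Phi_in_image_if_gamma_iso[OF iso] f_closed
  unfolding reflects_bij_def bij_betw_def inj_on_def by blast

lemma bij_betw_if_gamma_iso:
  assumes iso: "omega_iso (gamma G) (gamma H) (gamma_map H f)"
  shows "bij_betw (f n) (cells G n) (cells H n)"
proof (induction n)
  case 0
  have "Phi G 0 = id" "Phi H 0 = id" by (auto simp: Phi_def)
  then have "reflects_bij 0 (Phi G 0) (Phi H 0)" by (simp only: reflects_bij_id)
  then show ?case by (rule bij_betw_if_reflects_bij_Phi[OF iso])
next
  case (Suc n)
  then show ?case using bij_betw_if_reflects_bij_Phi[OF iso reflects_bij_Phi] by blast
qed

lemma cub_hom_inv_into: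
  assumes bij: "\<And>n. bij_betw (f n) (cells G n) (cells H n)"
  shows "cub_hom H G (\<lambda>n. inv_into (cells G n) (f n))" (is "cub_hom H G ?g")
proof -
  have inj: "inj_on (f n) (cells G n)" and onto: "f n ` cells G n = cells H n" for n
    using bij unfolding bij_betw_def by auto
  have g_closed: "?g n y \<in> cells G n" and f_g: "f n (?g n y) = y" if "y \<in> cells H n" for n y
    using that onto inv_into_into[of y "f n" "cells G n"] f_inv_into_f[of y "f n" "cells G n"] by auto
  have g_eqI: "?g n y = x" if "x \<in> cells G n" "f n x = y" for n x y
    using inv_into_f_eq[OF inj that] .
  show ?thesis
    unfolding cub_hom_def
  proof (intro conjI allI impI)
    fix n i \<alpha> x assume "1 \<le> i \<and> i \<le> n \<and> x \<in> cells H n"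
    then show "?g (n - 1) (face H n i \<alpha> x) = face G n i \<alpha> (?g n x)"
      using g_eqI G.face_closed f_face g_closed f_g by (cases n) auto
  next
    fix n i x assume "1 \<le> i \<and> i \<le> n \<and> x \<in> cells H (n - 1)"
    then show "?g n (degen H n i x) = degen G n i (?g (n - 1) x)"
      using g_eqI G.degen_closed f_degen g_closed f_g by (cases n) auto
  next
    fix n i \<alpha> x assume "1 \<le> i \<and> i \<le> n \<and> x \<in> cells H n"
    then show "?g (Suc n) (conn H n i \<alpha> x) = conn G n i \<alpha> (?g n x)"
      using g_eqI G.conn_closed f_conn g_closed f_g by auto
  next
    fix n j a b assume ab: "1 \<le> j \<and> j \<le> n \<and> composable H n j a b"
    then obtain m where n: "n = Suc m" by (cases n) auto
    have "composable G n j (?g n a) (?g n b)"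
      using composable_reflect[OF inj] ab g_closed f_g n unfolding composable_def by auto
    then show "?g n (comp H n j a b) = comp G n j (?g n a) (?g n b)"
      using g_eqI G.comp_closed f_comp ab g_closed f_g unfolding composable_def by auto
  qed (use g_closed in blast)
qed

lemma cub_iso_if_bij_betw:
  assumes "\<And>n. bij_betw (f n) (cells G n) (cells H n)"
  shows "cub_iso G H f"
  unfolding cub_iso_def
  using cub_hom cub_hom_inv_into[OF assms] bij_betw_inv_into_left[OF assms] bij_betw_inv_into_right[OF assms]
  by blast

end

theorem theorem8p6:
  fixes G :: "'a cubcat" and H :: "'b cubcat" and f :: "nat \<Rightarrow> 'a \<Rightarrow> 'b"
  assumes "cubical_omega_cat G"
    and "cubical_omega_cat H"
    and "cub_hom G H f"
    and "omega_iso (gamma G) (gamma H) (gamma_map H f)"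
  shows "cub_iso G H f"
proof -
  interpret cub_morphism G H f
    using assms(1-3) by (simp add: cub_morphism_def cub_omega_cat_def cub_morphism_axioms_def)
  show ?thesis using cub_iso_if_bij_betw bij_betw_if_gamma_iso[OF assms(4)] by blast
qed

end
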